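(* Let $(X,G)$ be a minimal topological dynamical system. If $F\in 2^X$ satisfies $V(F)=\pi_{eq}(F)$, then $F$ has the interior saturation property, i.e. $\pi_{eq}^{-1}(\mathrm{int}(\pi_{eq}(F)))\subset F$.
   Context: $G$ is an infinite countable discrete group; a tds $(X,G)$ is a compact metric space with a $G$-action by homeomorphisms; minimal means no proper nonempty closed invariant subset. $\pi_{eq}:X\to X_{eq}$ is the factor map onto the maximal equicontinuous factor, $\nu_{eq}$ the unique invariant probability measure of $(X_{eq},G)$. $2^X$ is the space of nonempty closed subsets with the Hausdorff metric $d_H$. $\mathcal X=\overline{\{\pi_{eq}^{-1}(y):y\in X_{eq}\}}\subset 2^X$; for $E\in\mathcal X$, $\pi_{\mathcal X}(E)$ is the single point $\pi_{eq}(E)$. $\mathcal X_{eq}^{\mathrm{meas}}=\{E\in\mathcal X:\nu_{eq}(\pi_{\mathcal X}(B^{\mathcal X}_\epsilon(E)))>0\ \forall\epsilon>0\}$, $B^{\mathcal X}_\epsilon(E)$ the open $d_H$-ball in $\mathcal X$. For $F\in 2^X$, $V(F)=\{y\in X_{eq}:\exists E\in\mathcal X_{eq}^{\mathrm{meas}}, E\subset F,\ \pi_{\mathcal X}(E)=y\}$. *)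

theory Defs
  imports "HOL-Analysis.Analysis" "HOL-Probability.Probability" "HOL-Algebra.Group"
begin

definition hausdist :: "'a::metric_space set \<Rightarrow> 'a set \<Rightarrow> real" where
  "hausdist A B = max (SUP a\<in>A. infdist a B) (SUP b\<in>B. infdist b A)"

definition tds :: "('g, 'm) monoid_scheme \<Rightarrow> 'a::metric_space set \<Rightarrow> ('g \<Rightarrow> 'a \<Rightarrow> 'a) \<Rightarrow> bool" where
  "tds G X act \<longleftrightarrow> group G \<and> countable (carrier G) \<and> infinite (carrier G)
     \<and> compact X \<and> X \<noteq> {}
     \<and> (\<forall>g\<in>carrier G. continuous_on X (act g) \<and> act g ` X \<subseteq> X)
     \<and> (\<forall>x\<in>X. act \<one>\<^bsub>G\<^esub> x = x)
     \<and> (\<forall>g\<in>carrier G. \<forall>h\<in>carrier G. \<forall>x\<in>X. act (g \<otimes>\<^bsub>G\<^esub> h) x = act g (act h x))"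

definition minimal_tds :: "('g, 'm) monoid_scheme \<Rightarrow> 'a::metric_space set \<Rightarrow> ('g \<Rightarrow> 'a \<Rightarrow> 'a) \<Rightarrow> bool" where
  "minimal_tds G X act \<longleftrightarrow> tds G X act \<and>
     (\<forall>Y. closed Y \<and> Y \<subseteq> X \<and> Y \<noteq> {} \<and> (\<forall>g\<in>carrier G. act g ` Y \<subseteq> Y) \<longrightarrow> Y = X)"

definition equicontinuous_tds :: "('g, 'm) monoid_scheme \<Rightarrow> 'a::metric_space set \<Rightarrow> ('g \<Rightarrow> 'a \<Rightarrow> 'a) \<Rightarrow> bool" where
  "equicontinuous_tds G Y act \<longleftrightarrow> tds G Y act \<and>
     (\<forall>e>0. \<exists>d>0. \<forall>g\<in>carrier G. \<forall>y\<in>Y. \<forall>y'\<in>Y. dist y y' < d \<longrightarrow> dist (act g y) (act g y') < e)"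

definition factor_map :: "('g, 'm) monoid_scheme \<Rightarrow> 'a::metric_space set \<Rightarrow> ('g \<Rightarrow> 'a \<Rightarrow> 'a)
     \<Rightarrow> 'b::metric_space set \<Rightarrow> ('g \<Rightarrow> 'b \<Rightarrow> 'b) \<Rightarrow> ('a \<Rightarrow> 'b) \<Rightarrow> bool" where
  "factor_map G X act Y actY p \<longleftrightarrow> tds G X act \<and> tds G Y actY \<and>
     continuous_on X p \<and> p ` X = Y \<and>
     (\<forall>g\<in>carrier G. \<forall>x\<in>X. p (act g x) = actY g (p x))"

(* Every compact metric space embeds in the
   Hilbert cube, so it suffices to quantify over factors living in nat \<Rightarrow> real
   (product topology / metric from HOL-Analysis.Function_Metric). *)
definition max_equicontinuous_factor :: "('g, 'm) monoid_scheme \<Rightarrow> 'a::metric_space set \<Rightarrow> ('g \<Rightarrow> 'a \<Rightarrow> 'a)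
     \<Rightarrow> 'b::metric_space set \<Rightarrow> ('g \<Rightarrow> 'b \<Rightarrow> 'b) \<Rightarrow> ('a \<Rightarrow> 'b) \<Rightarrow> bool" where
  "max_equicontinuous_factor G X act Y actY p \<longleftrightarrow>
     factor_map G X act Y actY p \<and> equicontinuous_tds G Y actY \<and>
     (\<forall>(Z :: (nat \<Rightarrow> real) set) actZ q.
        factor_map G X act Z actZ q \<and> equicontinuous_tds G Z actZ \<longrightarrow>
        (\<exists>f. continuous_on Y f \<and> (\<forall>x\<in>X. q x = f (p x))))"

definition invariant_prob :: "('g, 'm) monoid_scheme \<Rightarrow> 'b::metric_space set \<Rightarrow> ('g \<Rightarrow> 'b \<Rightarrow> 'b)
     \<Rightarrow> 'b measure \<Rightarrow> bool" where
  "invariant_prob G Y actY \<nu> \<longleftrightarrow> prob_space \<nu> \<and> space \<nu> = Y \<and>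
     sets \<nu> = sets (restrict_space borel Y) \<and>
     (\<forall>g\<in>carrier G. \<forall>A\<in>sets \<nu>. measure \<nu> (actY g -` A \<inter> Y) = measure \<nu> A)"

definition hyperspace :: "'a::metric_space set \<Rightarrow> 'a set set" where
  "hyperspace X = {F. F \<noteq> {} \<and> closed F \<and> F \<subseteq> X}"

definition fibre_closure :: "'a::metric_space set \<Rightarrow> 'b set \<Rightarrow> ('a \<Rightarrow> 'b) \<Rightarrow> 'a set set" where
  "fibre_closure X Y p = {E \<in> hyperspace X.
     \<forall>e>0. \<exists>y\<in>Y. hausdist E (p -` {y} \<inter> X) < e}"

definition pi_X :: "('a \<Rightarrow> 'b) \<Rightarrow> 'a set \<Rightarrow> 'b" where
  "pi_X p E = the_elem (p ` E)"

definition XBall :: "'a::metric_space set \<Rightarrow> 'b set \<Rightarrow> ('a \<Rightarrow> 'b) \<Rightarrow> 'a set \<Rightarrow> real \<Rightarrow> 'a set set" where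
  "XBall X Y p E e = {E' \<in> fibre_closure X Y p. hausdist E E' < e}"

definition Xeq_meas :: "'a::metric_space set \<Rightarrow> 'b set \<Rightarrow> ('a \<Rightarrow> 'b) \<Rightarrow> 'b measure \<Rightarrow> 'a set set" where
  "Xeq_meas X Y p \<nu> = {E \<in> fibre_closure X Y p.
     \<forall>e>0. measure \<nu> (pi_X p ` XBall X Y p E e) > 0}"

definition V_set :: "'a::metric_space set \<Rightarrow> 'b set \<Rightarrow> ('a \<Rightarrow> 'b) \<Rightarrow> 'b measure \<Rightarrow> 'a set \<Rightarrow> 'b set" where
  "V_set X Y p \<nu> F = {y \<in> Y. \<exists>E\<in>Xeq_meas X Y p \<nu>. E \<subseteq> F \<and> pi_X p E = y}"

end

theory Submission
  imports Defs
begin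

text \<open>Let \<open>peq x\<close> be an interior point of \<open>peq ` F\<close>; we show that \<open>F\<close> comes arbitrarily
close to \<open>x\<close>. For a small closed ball \<open>C\<close> around \<open>x\<close>, minimality gives finitely many group
elements whose translates of \<open>C\<close> cover \<open>X\<close>; projecting, finitely many closed translates of
\<open>peq ` C\<close> cover \<open>Xeq\<close>, so by a finite Baire argument \<open>peq ` C\<close> has nonempty interior \<open>S\<close>.
As \<open>peq ` C \<subseteq> peq ` F = V(F)\<close>, every point of \<open>S\<close> is \<open>pi_X peq E\<close> for some \<open>E \<subseteq> F\<close> in
\<open>fibre_closure\<close>. Such an \<open>E\<close> is a Hausdorff limit of fibres over points close to
\<open>pi_X peq E\<close>, hence over points of \<open>S \<subseteq> peq ` C\<close>; these fibres meet \<open>C\<close>, so \<open>E\<close> comes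
close to \<open>C\<close>.\<close>

lemma hausdist_commute: "hausdist A B = hausdist B A"
  by (simp add: hausdist_def max.commute)

lemma hausdist_less_imp_near:
  fixes A B :: "'a::metric_space set"
  assumes "hausdist A B < e" "a \<in> A" "bounded A" "B \<noteq> {}"
  shows "\<exists>b\<in>B. dist a b < e"
proof -
  obtain b0 where b0: "b0 \<in> B" using assms(4) by blast
  obtain M where M: "\<forall>a'\<in>A. dist b0 a' \<le> M" using assms(3) bounded_any_center by blast
  have "infdist a' B \<le> M" if "a' \<in> A" for a'
    using infdist_le[OF b0, of a'] M that by (metis dist_commute order_trans)
  then have "bdd_above ((\<lambda>a'. infdist a' B) ` A)" by (intro bdd_aboveI[of _ M]) blast
  then have "infdist a B \<le> (SUP a'\<in>A. infdist a' B)"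
    by (rule cSUP_upper[OF assms(2)])
  also have "\<dots> \<le> hausdist A B" unfolding hausdist_def by simp
  finally have "(INF b\<in>B. dist a b) < e"
    using assms(1,4) by (simp add: infdist_notempty)
  then show ?thesis
    using assms(4) by (subst (asm) cINF_less_iff) (auto intro: bdd_belowI[of _ 0])
qed

lemma fibre_closure_near_fibre:
  assumes "E \<in> fibre_closure X Y p" "compact X" "p ` X = Y" "\<epsilon> > 0"
  obtains y where "y \<in> Y" "\<forall>e\<in>E. \<exists>z\<in>X. p z = y \<and> dist e z < \<epsilon>"
    "\<forall>z\<in>X. p z = y \<longrightarrow> (\<exists>e\<in>E. dist e z < \<epsilon>)"
proof -
  have E: "E \<noteq> {}" "E \<subseteq> X" and "\<exists>y\<in>Y. hausdist E (p -` {y} \<inter> X) < \<epsilon>"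
    using assms(1,4) unfolding fibre_closure_def hyperspace_def by auto
  then obtain y where y: "y \<in> Y" "hausdist E (p -` {y} \<inter> X) < \<epsilon>" by blast
  have "bounded X" using assms(2) by (rule compact_imp_bounded)
  then have bounded: "bounded E" "bounded (p -` {y} \<inter> X)"
    using E(2) bounded_subset by blast+
  have fibre: "p -` {y} \<inter> X \<noteq> {}" using y(1) assms(3) by blast
  show thesis
  proof
    show "\<forall>e\<in>E. \<exists>z\<in>X. p z = y \<and> dist e z < \<epsilon>"
      using hausdist_less_imp_near[OF y(2) _ bounded(1) fibre] by fastforce
    show "\<forall>z\<in>X. p z = y \<longrightarrow> (\<exists>e\<in>E. dist e z < \<epsilon>)"
      using hausdist_less_imp_near[of "p -` {y} \<inter> X" E, OF _ _ bounded(2) E(1)] y(2)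
      by (fastforce simp: hausdist_commute dist_commute)
  qed (rule y(1))
qed

lemma fibre_closure_image:
  fixes p :: "'a::metric_space \<Rightarrow> 'b::metric_space"
  assumes "E \<in> fibre_closure X Y p" "compact X" "continuous_on X p" "p ` X = Y"
  shows "p ` E = {pi_X p E}"
proof -
  have E: "E \<noteq> {}" "E \<subseteq> X"
    using assms(1) unfolding fibre_closure_def hyperspace_def by auto
  have uc: "uniformly_continuous_on X p"
    using assms(3,2) by (rule compact_uniformly_continuous)
  have "p e1 = p e2" if e: "e1 \<in> E" "e2 \<in> E" for e1 e2
  proof (rule ccontr)
    assume "p e1 \<noteq> p e2"
    then have "dist (p e1) (p e2) / 2 > 0" by simp
    then obtain \<kappa> where \<kappa>: "\<kappa> > 0"
      "\<forall>a\<in>X. \<forall>b\<in>X. dist b a < \<kappa> \<longrightarrow> dist (p b) (p a) < dist (p e1) (p e2) / 2"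
      using uc unfolding uniformly_continuous_on_def by blast
    obtain y where "y \<in> Y" and near: "\<forall>e\<in>E. \<exists>z\<in>X. p z = y \<and> dist e z < \<kappa>"
      and "\<forall>z\<in>X. p z = y \<longrightarrow> (\<exists>e\<in>E. dist e z < \<kappa>)"
      by (rule fibre_closure_near_fibre[OF assms(1,2,4) \<kappa>(1)])
    have "dist y (p e) < dist (p e1) (p e2) / 2" if "e \<in> E" for e
    proof -
      obtain z where "z \<in> X" "p z = y" "dist e z < \<kappa>" using near \<open>e \<in> E\<close> by blast
      then show ?thesis using \<kappa>(2) \<open>e \<in> E\<close> E(2) by (metis dist_commute subsetD)
    qed
    then have "dist y (p e1) < dist (p e1) (p e2) / 2" "dist y (p e2) < dist (p e1) (p e2) / 2"
      using e by blast+
    then show False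
      using dist_triangle3[of "p e1" "p e2" y] by linarith
  qed
  moreover obtain e0 where "e0 \<in> E" using E(1) by blast
  ultimately have "p ` E = {p e0}" by blast
  then show ?thesis unfolding pi_X_def by simp
qed

lemma fibre_closure_near_fibre_in_open:
  fixes p :: "'a::metric_space \<Rightarrow> 'b::metric_space"
  assumes "E \<in> fibre_closure X Y p" "compact X" "continuous_on X p" "p ` X = Y"
    and "openin (top_of_set Y) S" "pi_X p E \<in> S" "\<epsilon> > 0"
  obtains y where "y \<in> S" "\<forall>z\<in>X. p z = y \<longrightarrow> (\<exists>e\<in>E. dist e z < \<epsilon>)"
proof -
  obtain e0 where e0: "e0 \<in> E" "p e0 = pi_X p E"
    using fibre_closure_image[OF assms(1-4)] by blast
  have "e0 \<in> X"
    using e0(1) assms(1) unfolding fibre_closure_def hyperspace_def by auto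
  obtain \<eta> where \<eta>: "\<eta> > 0" "ball (p e0) \<eta> \<inter> Y \<subseteq> S"
    using assms(5,6) e0(2) unfolding openin_contains_ball by metis
  have "uniformly_continuous_on X p"
    using assms(3,2) by (rule compact_uniformly_continuous)
  then obtain \<kappa> where \<kappa>: "\<kappa> > 0" "\<forall>a\<in>X. \<forall>b\<in>X. dist b a < \<kappa> \<longrightarrow> dist (p b) (p a) < \<eta>"
    using \<eta>(1) unfolding uniformly_continuous_on_def by blast
  define \<epsilon>' where "\<epsilon>' = min \<kappa> \<epsilon>"
  have \<epsilon>': "\<epsilon>' > 0" "\<epsilon>' \<le> \<kappa>" "\<epsilon>' \<le> \<epsilon>"
    using \<kappa>(1) assms(7) unfolding \<epsilon>'_def by auto
  obtain y where y: "y \<in> Y" "\<forall>e\<in>E. \<exists>z\<in>X. p z = y \<and> dist e z < \<epsilon>'"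
    "\<forall>z\<in>X. p z = y \<longrightarrow> (\<exists>e\<in>E. dist e z < \<epsilon>')"
    by (rule fibre_closure_near_fibre[OF assms(1,2,4) \<epsilon>'(1)])
  obtain z where "z \<in> X" "p z = y" "dist e0 z < \<kappa>"
    using y(2) e0(1) \<epsilon>'(2) by (meson less_le_trans)
  then have "dist (p e0) y < \<eta>"
    using \<kappa>(2) \<open>e0 \<in> X\<close> by (metis dist_commute)
  then have "y \<in> S"
    using y(1) \<eta>(2) by auto
  moreover have "\<forall>z\<in>X. p z = y \<longrightarrow> (\<exists>e\<in>E. dist e z < \<epsilon>)"
    using y(3) \<epsilon>'(3) by (meson less_le_trans)
  ultimately show thesis by (rule that)
qed

lemma tds_act_closed: "tds G X act \<Longrightarrow> g \<in> carrier G \<Longrightarrow> x \<in> X \<Longrightarrow> act g x \<in> X"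
  unfolding tds_def by blast

lemma tds_act_one: "tds G X act \<Longrightarrow> x \<in> X \<Longrightarrow> act \<one>\<^bsub>G\<^esub> x = x"
  unfolding tds_def by blast

lemma tds_act_mult:
  "tds G X act \<Longrightarrow> g \<in> carrier G \<Longrightarrow> h \<in> carrier G \<Longrightarrow> x \<in> X
    \<Longrightarrow> act (g \<otimes>\<^bsub>G\<^esub> h) x = act g (act h x)"
  unfolding tds_def by blast

lemma tds_act_inv_act:
  assumes "tds G X act" "g \<in> carrier G" "x \<in> X"
  shows "act (inv\<^bsub>G\<^esub> g) (act g x) = x"
proof -
  have "group G" using assms(1) unfolding tds_def by blast
  then have "inv\<^bsub>G\<^esub> g \<in> carrier G" "inv\<^bsub>G\<^esub> g \<otimes>\<^bsub>G\<^esub> g = \<one>\<^bsub>G\<^esub>"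
    using assms(2) by (auto simp: group.l_inv)
  then show ?thesis
    using tds_act_mult[OF assms(1) _ assms(2,3)] tds_act_one[OF assms(1,3)] by metis
qed

lemma tds_homeomorphism:
  assumes "tds G X act" "g \<in> carrier G"
  shows "homeomorphism X X (act g) (act (inv\<^bsub>G\<^esub> g))"
proof -
  have "group G" using assms(1) unfolding tds_def by blast
  then have inv: "inv\<^bsub>G\<^esub> g \<in> carrier G" "inv\<^bsub>G\<^esub> (inv\<^bsub>G\<^esub> g) = g"
    using assms(2) by (auto simp: group.inv_inv)
  show ?thesis
  proof
    show "act (inv\<^bsub>G\<^esub> g) (act g x) = x" if "x \<in> X" for x
      using tds_act_inv_act[OF assms that] .
    show "act g (act (inv\<^bsub>G\<^esub> g) y) = y" if "y \<in> X" for y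
      using tds_act_inv_act[OF assms(1) inv(1) that] inv(2) by simp
  qed (use assms inv in \<open>auto simp: tds_def\<close>)
qed

lemma tds_orbit_avoiding_closed:
  assumes "tds G X act" "open U"
  shows "closed {z \<in> X. \<forall>g\<in>carrier G. act g z \<notin> U}"
proof -
  have "closed X" using assms(1) unfolding tds_def by (blast intro: compact_imp_closed)
  have "closed (X \<inter> act g -` (- U))" if "g \<in> carrier G" for g
    using assms that \<open>closed X\<close> unfolding tds_def
    by (intro continuous_closed_preimage) auto
  then have "closed (\<Inter>g\<in>carrier G. X \<inter> act g -` (- U))"
    by (intro closed_INT) blast
  then have "closed (X \<inter> (\<Inter>g\<in>carrier G. X \<inter> act g -` (- U)))"
    using \<open>closed X\<close> by (metis closed_Int)
  moreover have "{z \<in> X. \<forall>g\<in>carrier G. act g z \<notin> U} = X \<inter> (\<Inter>g\<in>carrier G. X \<inter> act g -` (- U))"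
    by auto
  ultimately show ?thesis by simp
qed

lemma tds_orbit_avoiding_invariant:
  assumes "tds G X act" "h \<in> carrier G"
  shows "act h ` {z \<in> X. \<forall>g\<in>carrier G. act g z \<notin> U} \<subseteq> {z \<in> X. \<forall>g\<in>carrier G. act g z \<notin> U}"
proof
  fix w assume "w \<in> act h ` {z \<in> X. \<forall>g\<in>carrier G. act g z \<notin> U}"
  then obtain z where z: "z \<in> X" "\<forall>g\<in>carrier G. act g z \<notin> U" "w = act h z" by blast
  have "group G" using assms(1) unfolding tds_def by blast
  have "act g w \<notin> U" if "g \<in> carrier G" for g
  proof -
    have "g \<otimes>\<^bsub>G\<^esub> h \<in> carrier G"
      using \<open>group G\<close> that assms(2) by (simp add: group.is_monoid monoid.m_closed)
    moreover have "act g w = act (g \<otimes>\<^bsub>G\<^esub> h) z"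
      using tds_act_mult[OF assms(1) that assms(2) z(1)] z(3) by simp
    ultimately show ?thesis using z(2) by simp
  qed
  moreover have "w \<in> X"
    using tds_act_closed[OF assms z(1)] z(3) by simp
  ultimately show "w \<in> {z \<in> X. \<forall>g\<in>carrier G. act g z \<notin> U}" by blast
qed

lemma minimal_tds_orbit_meets_open:
  assumes "minimal_tds G X act" "open U" "U \<inter> X \<noteq> {}" "x \<in> X"
  shows "\<exists>g\<in>carrier G. act g x \<in> U"
proof -
  have tds: "tds G X act" using assms(1) unfolding minimal_tds_def by blast
  have minimal: "Z = X" if "closed Z" "Z \<subseteq> X" "Z \<noteq> {}" "\<forall>g\<in>carrier G. act g ` Z \<subseteq> Z" for Z
    using assms(1) that unfolding minimal_tds_def by blast
  define Z where "Z = {z \<in> X. \<forall>g\<in>carrier G. act g z \<notin> U}"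
  have "Z \<noteq> X"
  proof -
    obtain u where u: "u \<in> U" "u \<in> X" using assms(3) by blast
    have "group G" using tds unfolding tds_def by blast
    then have "\<one>\<^bsub>G\<^esub> \<in> carrier G"
      using monoid.one_closed[OF group.is_monoid] by blast
    then have "u \<notin> Z"
      using tds_act_one[OF tds u(2)] u(1) unfolding Z_def by force
    then show ?thesis using u(2) by blast
  qed
  moreover have "closed Z" "Z \<subseteq> X" "\<forall>g\<in>carrier G. act g ` Z \<subseteq> Z"
    unfolding Z_def using tds_orbit_avoiding_closed[OF tds assms(2)]
      tds_orbit_avoiding_invariant[OF tds] by auto
  ultimately have "Z = {}" using minimal by blast
  then show ?thesis using assms(4) unfolding Z_def by blast
qed

lemma minimal_tds_finite_translates_cover:
  assumes "minimal_tds G X act" "open U" "U \<inter> X \<noteq> {}"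
  obtains K where "K \<subseteq> carrier G" "finite K" "X \<subseteq> (\<Union>g\<in>K. act g -` U)"
proof -
  have tds: "tds G X act" using assms(1) unfolding minimal_tds_def by blast
  define C where "C = (\<lambda>g. X \<inter> act g -` U) ` carrier G"
  have "\<forall>c\<in>C. openin (top_of_set X) c"
    using tds assms(2) unfolding C_def tds_def by (auto intro: continuous_openin_preimage_gen)
  moreover have "X \<subseteq> \<Union>C"
    using minimal_tds_orbit_meets_open[OF assms] unfolding C_def by blast
  moreover have "compact X" using tds unfolding tds_def by blast
  ultimately obtain D where "D \<subseteq> C" "finite D" "X \<subseteq> \<Union>D"
    unfolding compact_eq_openin_cover by meson
  moreover from this obtain K where "K \<subseteq> carrier G" "finite K" "D = (\<lambda>g. X \<inter> act g -` U) ` K"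
    unfolding C_def by (meson finite_subset_image)
  ultimately show thesis by (intro that) auto
qed

lemma finite_closed_cover_interior:
  assumes "finite K" "openin (top_of_set Y) W" "W \<noteq> {}" "W \<subseteq> (\<Union>g\<in>K. A g)"
    "\<forall>g\<in>K. closed (A g)"
  shows "\<exists>g\<in>K. \<exists>S. openin (top_of_set Y) S \<and> S \<noteq> {} \<and> S \<subseteq> A g"
  using assms
proof (induction K arbitrary: W rule: finite_induct)
  case empty
  then show ?case by simp
next
  case (insert g K)
  show ?case
  proof (cases "W \<subseteq> A g")
    case True
    then show ?thesis using insert.prems(1,2) by blast
  next
    case False
    have "W - A g = W - (Y \<inter> A g)"
      using insert.prems(1) by (auto dest: openin_imp_subset)
    then have "openin (top_of_set Y) (W - A g)"
      using insert.prems by (auto intro: openin_diff closedin_closed_Int)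
    moreover have "W - A g \<noteq> {}" "W - A g \<subseteq> (\<Union>g\<in>K. A g)"
      using False insert.prems by blast+
    ultimately show ?thesis
      using insert.IH[of "W - A g"] insert.prems(4) by blast
  qed
qed

lemma minimal_factor_image_cball_interior:
  assumes "minimal_tds G X act" "factor_map G X act Y actY p" "x \<in> X" "\<rho> > 0"
  obtains S where "openin (top_of_set Y) S" "S \<noteq> {}" "S \<subseteq> p ` (X \<inter> cball x \<rho>)"
proof -
  define C where "C = X \<inter> cball x \<rho>"
  have tdsX: "tds G X act" and tdsY: "tds G Y actY" and contp: "continuous_on X p"
    and onto: "p ` X = Y" and equivariant: "\<And>g z. g \<in> carrier G \<Longrightarrow> z \<in> X \<Longrightarrow> p (act g z) = actY g (p z)"
    using assms(2) unfolding factor_map_def by auto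
  have "compact X" "compact Y" "Y \<noteq> {}" using tdsX tdsY unfolding tds_def by auto
  have "compact (p ` C)"
    using contp \<open>compact X\<close> unfolding C_def
    by (intro compact_continuous_image) (auto intro: continuous_on_subset)
  have "ball x \<rho> \<inter> X \<noteq> {}" using assms(3,4) centre_in_ball by blast
  then obtain K where K: "K \<subseteq> carrier G" "finite K" "X \<subseteq> (\<Union>g\<in>K. act g -` ball x \<rho>)"
    by (rule minimal_tds_finite_translates_cover[OF assms(1) open_ball])
  define A where "A g = Y \<inter> actY g -` (p ` C)" for g
  have closed: "\<forall>g\<in>K. closed (A g)"
  proof
    fix g assume "g \<in> K"
    have "continuous_on Y (actY g)" using tdsY K(1) \<open>g \<in> K\<close> unfolding tds_def by blast
    then show "closed (A g)" unfolding A_def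
      using compact_imp_closed[OF \<open>compact Y\<close>] compact_imp_closed[OF \<open>compact (p ` C)\<close>]
      by (rule continuous_closed_preimage)
  qed
  have cover: "Y \<subseteq> (\<Union>g\<in>K. A g)"
  proof
    fix w assume "w \<in> Y"
    then obtain z g where z: "z \<in> X" "w = p z" and g: "g \<in> K" "act g z \<in> ball x \<rho>"
      using onto K(3) by blast
    have "act g z \<in> C"
      using tds_act_closed[OF tdsX _ z(1)] K(1) g unfolding C_def by auto
    moreover have "actY g w = p (act g z)"
      using equivariant[OF _ z(1)] K(1) g(1) z(2) by auto
    ultimately have "w \<in> A g" using \<open>w \<in> Y\<close> unfolding A_def by auto
    then show "w \<in> (\<Union>g\<in>K. A g)" using g(1) by blast
  qed
  obtain g S0 where "g \<in> K" and S0: "openin (top_of_set Y) S0" "S0 \<noteq> {}" "S0 \<subseteq> A g"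
    using finite_closed_cover_interior[OF K(2) openin_subtopology_self \<open>Y \<noteq> {}\<close> cover closed] by blast
  have "homeomorphism Y Y (actY g) (actY (inv\<^bsub>G\<^esub> g))"
    using tds_homeomorphism[OF tdsY] K(1) \<open>g \<in> K\<close> by blast
  then have "openin (top_of_set Y) (actY g ` S0)"
    using S0(1) by (rule homeomorphism_imp_open_map)
  moreover have "actY g ` S0 \<noteq> {}" "actY g ` S0 \<subseteq> p ` C"
    using S0(2,3) unfolding A_def by auto
  ultimately show thesis using that unfolding C_def by blast
qed

lemma minimal_factor_V_set_near:
  assumes "minimal_tds G X act" "factor_map G X act Y actY p" "x \<in> X" "\<rho> > 0" "\<epsilon> > 0"
    and "p ` (X \<inter> cball x \<rho>) \<subseteq> V_set X Y p \<nu> F"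
  shows "\<exists>e\<in>F. dist x e < \<rho> + \<epsilon>"
proof -
  have contp: "continuous_on X p" and onto: "p ` X = Y" and "compact X"
    using assms(2) unfolding factor_map_def tds_def by auto
  obtain S where S: "openin (top_of_set Y) S" "S \<noteq> {}" "S \<subseteq> p ` (X \<inter> cball x \<rho>)"
    by (rule minimal_factor_image_cball_interior[OF assms(1-4)])
  then obtain y' where "y' \<in> S" "y' \<in> V_set X Y p \<nu> F" using assms(6) by blast
  then obtain E where E: "E \<in> Xeq_meas X Y p \<nu>" "E \<subseteq> F" "pi_X p E \<in> S"
    unfolding V_set_def by blast
  then have "E \<in> fibre_closure X Y p" unfolding Xeq_meas_def by blast
  then obtain y where "y \<in> S" and near: "\<forall>z\<in>X. p z = y \<longrightarrow> (\<exists>e\<in>E. dist e z < \<epsilon>)"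
    using fibre_closure_near_fibre_in_open[OF _ \<open>compact X\<close> contp onto S(1) E(3) assms(5)] by metis
  then obtain c where "c \<in> X" "dist x c \<le> \<rho>" "p c = y" using S(3) by auto
  then obtain e where "e \<in> E" "dist e c < \<epsilon>" using near by blast
  moreover have "dist x e < \<rho> + \<epsilon>"
    using \<open>dist x c \<le> \<rho>\<close> \<open>dist e c < \<epsilon>\<close> dist_triangle[of x e c] dist_commute[of c e] by linarith
  ultimately show ?thesis using E(2) by blast
qed

theorem lemma3p6:
  fixes G :: "('g, 'm) monoid_scheme"
    and X :: "'a::metric_space set" and act :: "'g \<Rightarrow> 'a \<Rightarrow> 'a"
    and Xeq :: "'b::metric_space set" and acteq :: "'g \<Rightarrow> 'b \<Rightarrow> 'b"
    and peq :: "'a \<Rightarrow> 'b" and \<nu> :: "'b measure" and F :: "'a set"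
  assumes "minimal_tds G X act"
    and "max_equicontinuous_factor G X act Xeq acteq peq"
    and "invariant_prob G Xeq acteq \<nu>"
    and "F \<in> hyperspace X"
    and "V_set X Xeq peq \<nu> F = peq ` F"
  shows "peq -` ((subtopology euclidean Xeq) interior_of (peq ` F)) \<inter> X \<subseteq> F"
proof
  have factor: "factor_map G X act Xeq acteq peq"
    using assms(2) unfolding max_equicontinuous_factor_def by blast
  then have contp: "continuous_on X peq" and onto: "peq ` X = Xeq"
    unfolding factor_map_def by auto
  fix x assume "x \<in> peq -` ((subtopology euclidean Xeq) interior_of (peq ` F)) \<inter> X"
  then obtain T where "x \<in> X" and T: "openin (top_of_set Xeq) T" "peq x \<in> T" "T \<subseteq> peq ` F"
    unfolding interior_of_def by blast
  have "openin (top_of_set X) (X \<inter> peq -` T)"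
    using continuous_openin_preimage[OF contp _ T(1)] onto by blast
  then obtain \<delta> where "\<delta> > 0" and \<delta>: "ball x \<delta> \<inter> X \<subseteq> X \<inter> peq -` T"
    using \<open>x \<in> X\<close> T(2) unfolding openin_contains_ball by blast
  have "\<exists>e\<in>F. dist e x < \<epsilon>" if "\<epsilon> > 0" for \<epsilon>
  proof -
    define \<rho> where "\<rho> = min \<delta> \<epsilon> / 2"
    have "\<rho> > 0" "\<rho> < \<delta>" "\<rho> + \<epsilon> / 2 \<le> \<epsilon>" "\<epsilon> / 2 > 0"
      using \<open>\<delta> > 0\<close> that unfolding \<rho>_def by auto
    have "cball x \<rho> \<subseteq> ball x \<delta>" using \<open>\<rho> < \<delta>\<close> by auto
    then have "cball x \<rho> \<inter> X \<subseteq> X \<inter> peq -` T" using \<delta> by blast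
    then have "peq ` (X \<inter> cball x \<rho>) \<subseteq> V_set X Xeq peq \<nu> F"
      unfolding assms(5) using T(3) by blast
    then obtain e where "e \<in> F" "dist x e < \<rho> + \<epsilon> / 2"
      using minimal_factor_V_set_near[OF assms(1) factor \<open>x \<in> X\<close> \<open>\<rho> > 0\<close> \<open>\<epsilon> / 2 > 0\<close>] by blast
    then show ?thesis
      using \<open>\<rho> + \<epsilon> / 2 \<le> \<epsilon>\<close> by (metis dist_commute order_less_le_trans)
  qed
  then have "x \<in> closure F" unfolding closure_approachable by blast
  moreover have "closed F" using assms(4) unfolding hyperspace_def by blast
  ultimately show "x \<in> F" by (simp add: closure_closed)
qed

end
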